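(* Fix $b\in\mathbb{N}$ and integers $M\ge2$, $N\ge2$. Let $P$ be the $b$-pattern on the rectangle with vertices $(1,1),(M,1),(M,N),(1,N)$ in which every boundary point (i.e. every point of $\{(1,s),(M,s),(r,1),(r,N): 1\le r\le M,\ 1\le s\le N\}$) is a circle and every interior point $(r,s)$ with $1<r<M$, $1<s<N$ is a cross. For $b=1$, $P$ is realizable in $L$ if and only if $M$ and $N$ are both odd. For $b\ge2$, $P$ is realizable in $L$ if and only if $M$ is odd or $N<2^b$. In particular, there are arbitrarily large rectangular regions of $b$-invisible points whose boundary consists of $b$-visible points.
   Context: $L=\mathbb{N}\times\mathbb{N}$. For $r,s\in\mathbb{N}$, $\gcd_b(r,s)=\max\{k\in\mathbb{N} : k\mid r \text{ and } k^b\mid s\}$; $(r,s)$ is $b$-visible if $\gcd_b(r,s)=1$ and $b$-invisible otherwise. A $b$-pattern is obtained by choosing a positive integer $w$ and assigning to each $(r,s)\in L$ with $1\le r\le w$, $1\le s\le w^b$ a cross, a circle, or neither. It is realizable in $L$ if there is $(u,v)\in L$ such that $(u+r,v+s)$ is $b$-visible for every circle $(r,s)$ and $b$-invisible for every cross $(r,s)$. *)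

theory Defs
  imports Main
begin

text \<open>Natural numbers include 0 (so L = nat x nat). gcd_b(r,s) = max {k. k dvd r and k^b dvd s}.\<close>
definition gcd_b :: "nat \<Rightarrow> nat \<Rightarrow> nat \<Rightarrow> nat" where
  "gcd_b b r s = Max {k. k dvd r \<and> k ^ b dvd s}"

definition b_visible :: "nat \<Rightarrow> nat \<Rightarrow> nat \<Rightarrow> bool" where
  "b_visible b r s \<longleftrightarrow> gcd_b b r s = 1"

text \<open>A b-pattern: a size w > 0 together with disjoint sets of circles and crosses
  inside the box [1,w] x [1,w^b] (all other points are "neither").\<close>
definition is_b_pattern :: "nat \<Rightarrow> nat \<Rightarrow> (nat \<times> nat) set \<Rightarrow> (nat \<times> nat) set \<Rightarrow> bool" where
  "is_b_pattern b w circles crosses \<longleftrightarrow> 0 < w \<and> circles \<inter> crosses = {} \<and>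
     (\<forall>(r,s) \<in> circles \<union> crosses. 1 \<le> r \<and> r \<le> w \<and> 1 \<le> s \<and> s \<le> w ^ b)"

definition realizable :: "nat \<Rightarrow> (nat \<times> nat) set \<Rightarrow> (nat \<times> nat) set \<Rightarrow> bool" where
  "realizable b circles crosses \<longleftrightarrow>
     (\<exists>u v. (\<forall>(r,s) \<in> circles. b_visible b (u + r) (v + s)) \<and>
            (\<forall>(r,s) \<in> crosses. \<not> b_visible b (u + r) (v + s)))"

definition rect_boundary :: "nat \<Rightarrow> nat \<Rightarrow> (nat \<times> nat) set" where
  "rect_boundary M N = {(r,s). 1 \<le> r \<and> r \<le> M \<and> 1 \<le> s \<and> s \<le> N \<and>
                          (r = 1 \<or> r = M \<or> s = 1 \<or> s = N)}"

definition rect_interior :: "nat \<Rightarrow> nat \<Rightarrow> (nat \<times> nat) set" where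
  "rect_interior M N = {(r,s). 1 < r \<and> r < M \<and> 1 < s \<and> s < N}"

end

theory Submission
  imports Defs "HOL-Number_Theory.Number_Theory"
begin

text \<open>A point (u + r, v + s) with u + r > 0 is b-invisible exactly when some prime p divides
  u + r while p^b divides v + s. So if a pattern is realizable then, for every prime p, some
  residue pair (a mod p, c mod p^b) is hit by no circle (r, s), i.e. never p | a + r and
  p^b | c + s. Conversely this local condition suffices, by the Chinese remainder theorem
  applied twice. First fix u modulo the finitely many primes p with p^b at most the height,
  following the local condition, and modulo a private prime p_x exceeding width plus height
  for each cross x = (r, s), so that p_x divides u + r. Then fix v modulo p^b for the finitely
  many primes p dividing some u + r: such that p_x^b divides v + s (no other point of the box
  is hit by p_x), following the local condition for the small primes, and v = 0 modulo p^b
  for all other p, whose p^b exceeds the height.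

  For the rectangle the local condition can only fail at p = 2: if M is even then one of
  the columns 1, M has even u + r and meets a window of 2^b consecutive rows once N >= 2^b;
  if b = 1 and N is even the same happens with the rows 1, N and the columns 1, 2.\<close>

lemma finite_gcd_b_candidates: "0 < r \<Longrightarrow> finite {k. k dvd r \<and> k ^ b dvd (s::nat)}"
  by (rule finite_subset[of _ "{..r}"]) (auto simp: dvd_imp_le)

lemma b_visible_iff_no_prime_power_divisor:
  fixes r s :: nat
  assumes "0 < r"
  shows "b_visible b r s \<longleftrightarrow> (\<forall>p. prime p \<longrightarrow> p dvd r \<longrightarrow> \<not> p ^ b dvd s)"
proof
  assume vis: "b_visible b r s"
  show "\<forall>p. prime p \<longrightarrow> p dvd r \<longrightarrow> \<not> p ^ b dvd s"
  proof (intro allI impI notI)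
    fix p :: nat assume "prime p" "p dvd r" "p ^ b dvd s"
    then have "p \<le> gcd_b b r s"
      unfolding gcd_b_def using finite_gcd_b_candidates[OF assms] by (intro Max_ge) auto
    with vis prime_ge_2_nat[OF \<open>prime p\<close>] show False
      unfolding b_visible_def by simp
  qed
next
  assume no_divisor: "\<forall>p. prime p \<longrightarrow> p dvd r \<longrightarrow> \<not> p ^ b dvd s"
  let ?g = "gcd_b b r s"
  have "?g \<in> {k. k dvd r \<and> k ^ b dvd s}"
    unfolding gcd_b_def using finite_gcd_b_candidates[OF assms] by (intro Max_in) auto
  then have g: "?g dvd r" "?g ^ b dvd s" by auto
  show "b_visible b r s"
  proof (rule ccontr)
    assume "\<not> b_visible b r s"
    then obtain p where p: "prime p" "p dvd ?g"
      unfolding b_visible_def using prime_factor_nat by blast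
    then have "p dvd r" "p ^ b dvd s"
      using dvd_trans[OF p(2) g(1)] dvd_trans[OF dvd_power_same[OF p(2)] g(2)] by auto
    with no_divisor \<open>prime p\<close> show False by blast
  qed
qed

lemma not_b_visible_if_prime_power_divisor:
  fixes p r s :: nat
  assumes "0 < r" "prime p" "p dvd r" "p ^ b dvd s"
  shows "\<not> b_visible b r s"
  using assms b_visible_iff_no_prime_power_divisor by blast

definition admissible_at :: "nat \<Rightarrow> nat \<Rightarrow> (nat \<times> nat) set \<Rightarrow> bool" where
  "admissible_at b p C \<longleftrightarrow> (\<exists>a c. \<forall>(r, s) \<in> C. \<not> (p dvd a + r \<and> p ^ b dvd c + s))"

lemma admissible_at_if_realizable:
  assumes "realizable b C X" "\<And>r s. (r, s) \<in> C \<Longrightarrow> 0 < r" "prime p"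
  shows "admissible_at b p C"
proof -
  obtain u v where vis: "\<forall>(r, s) \<in> C. b_visible b (u + r) (v + s)"
    using assms(1) unfolding realizable_def by blast
  have "\<not> (p dvd u + r \<and> p ^ b dvd v + s)" if "(r, s) \<in> C" for r s
    using vis that assms(2)[OF that] assms(3)
      b_visible_iff_no_prime_power_divisor[of "u + r" b "v + s"] by auto
  then show ?thesis unfolding admissible_at_def by blast
qed

lemma chinese_remainder_prime_powers:
  fixes f :: "nat \<Rightarrow> nat"
  assumes "finite S" "\<And>p. p \<in> S \<Longrightarrow> prime p"
  shows "\<exists>x. \<forall>p\<in>S. \<forall>t. p ^ k dvd x + t \<longleftrightarrow> p ^ k dvd f p + t"
proof -
  have "coprime (p ^ k) (q ^ k)" if "p \<in> S" "q \<in> S" "p \<noteq> q" for p q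
    using primes_coprime[OF assms(2)[OF that(1)] assms(2)[OF that(2)] that(3)] by simp
  then obtain x where x: "\<forall>p\<in>S. [x = f p] (mod p ^ k)"
    using chinese_remainder_nat[OF assms(1), of "\<lambda>p. p ^ k" f] by blast
  have "p ^ k dvd x + t \<longleftrightarrow> p ^ k dvd f p + t" if "p \<in> S" for p t
  proof -
    have "[x + t = f p + t] (mod p ^ k)" using x that by (simp add: cong_add_rcancel_nat)
    then show ?thesis by (rule cong_dvd_iff)
  qed
  then show ?thesis by blast
qed

lemma eq_if_dvd_shifts:
  fixes m x r r' :: nat
  assumes "m dvd x + r" "m dvd x + r'" "r < m" "r' < m"
  shows "r = r'"
proof -
  have "[x + r = x + r'] (mod m)"
    using assms(1,2) by (metis cong_0_iff cong_sym cong_trans)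
  then show ?thesis
    using assms(3,4) cong_add_lcancel_nat cong_less_modulus_unique_nat by blast
qed

lemma pair_eq_if_dvd_shifts:
  fixes p q u v r r' s s' :: nat
  assumes "p dvd u + r" "p dvd u + r'" "q dvd v + s" "q dvd v + s'"
    and "r < p" "r' < p" "s < q" "s' < q"
  shows "(r, s) = (r', s')"
  using eq_if_dvd_shifts[OF assms(1,2,5,6)] eq_if_dvd_shifts[OF assms(3,4,7,8)] by simp

lemma ex_multiple_in_window:
  fixes m v :: nat
  assumes "0 < m"
  shows "\<exists>s \<in> {1..m}. m dvd v + s"
proof
  have "v + (m - v mod m) = (v div m) * m + m"
    using div_mult_mod_eq[of v m] mod_less_divisor[OF assms, of v] by linarith
  then show "m dvd v + (m - v mod m)" by simp
  show "m - v mod m \<in> {1..m}" using mod_less_divisor[OF assms, of v] by simp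
qed

lemma ex_big_primes_onto:
  fixes K :: nat and X :: "'a set"
  assumes "finite X"
  obtains B \<xi> where "finite B" "\<And>p. p \<in> B \<Longrightarrow> prime p \<and> K < p" "\<xi> ` B = X"
proof -
  have "infinite {p::nat. prime p \<and> K < p}"
    unfolding infinite_nat_iff_unbounded
  proof
    fix m :: nat
    obtain p where "prime p" "max m K < p" using bigger_prime by blast
    then show "\<exists>p>m. p \<in> {p. prime p \<and> K < p}" by auto
  qed
  then obtain B where "finite B" "card B = card X" "B \<subseteq> {p. prime p \<and> K < p}"
    using infinite_arbitrarily_large by blast
  moreover obtain \<xi> where "bij_betw \<xi> B X"
    using finite_same_card_bij[OF \<open>finite B\<close> assms \<open>card B = card X\<close>] by blast
  ultimately show thesis
    using that[of B \<xi>] bij_betw_imp_surj_on[of \<xi> B X] by blast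
qed

lemma realizable_if_residues:
  fixes u w :: nat and c :: "nat \<Rightarrow> nat"
  assumes columns: "\<And>r s. (r, s) \<in> C \<union> X \<Longrightarrow> 1 \<le> r \<and> r \<le> w"
    and circles: "\<And>p r s. prime p \<Longrightarrow> (r, s) \<in> C \<Longrightarrow> p dvd u + r \<Longrightarrow> \<not> p ^ b dvd c p + s"
    and crosses: "\<And>r s. (r, s) \<in> X \<Longrightarrow> \<exists>p. prime p \<and> p dvd u + r \<and> p ^ b dvd c p + s"
  shows "realizable b C X"
proof -
  have "finite {p. prime p \<and> p \<le> u + w}" by simp
  then obtain v where v: "\<forall>p\<in>{p. prime p \<and> p \<le> u + w}. \<forall>t. p ^ b dvd v + t \<longleftrightarrow> p ^ b dvd c p + t"
    using chinese_remainder_prime_powers[where k = b and f = c] by blast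
  have v_column: "p ^ b dvd v + t \<longleftrightarrow> p ^ b dvd c p + t"
    if "prime p" "p dvd u + r" "(r, s) \<in> C \<union> X" for p r s t
  proof -
    have "0 < u + r" using columns[OF that(3)] by simp
    then have "p \<le> u + r" using dvd_imp_le[OF that(2)] by blast
    then have "p \<le> u + w" using columns[OF that(3)] by linarith
    then show ?thesis using v that(1) by simp
  qed
  have "b_visible b (u + r) (v + s)" if "(r, s) \<in> C" for r s
  proof -
    have "0 < u + r" using columns that by fastforce
    moreover have "\<not> p ^ b dvd v + s" if "prime p" "p dvd u + r" for p
    proof -
      have "p ^ b dvd v + s \<longleftrightarrow> p ^ b dvd c p + s"
        using v_column[of p r s s] that \<open>(r, s) \<in> C\<close> by blast
      then show ?thesis using circles[OF that(1) \<open>(r, s) \<in> C\<close> that(2)] by blast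
    qed
    ultimately show ?thesis using b_visible_iff_no_prime_power_divisor[of "u + r" b "v + s"] by blast
  qed
  moreover have "\<not> b_visible b (u + r) (v + s)" if rs: "(r, s) \<in> X" for r s
  proof -
    obtain p where p: "prime p" "p dvd u + r" "p ^ b dvd c p + s" using crosses[OF rs] by blast
    have "0 < u + r" using columns rs by fastforce
    moreover have "p ^ b dvd v + s" using v_column[of p r s s] p rs by blast
    ultimately show ?thesis using not_b_visible_if_prime_power_divisor[OF _ p(1,2)] by blast
  qed
  ultimately show ?thesis unfolding realizable_def by fast
qed

lemma ex_first_coordinate:
  fixes b h :: nat and B :: "nat set" and \<rho> :: "nat \<Rightarrow> nat"
  assumes "1 \<le> b" "finite B" "\<And>p. p \<in> B \<Longrightarrow> prime p \<and> h < p \<and> \<rho> p < p"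
    and admissible: "\<And>p. prime p \<Longrightarrow> admissible_at b p C"
  obtains u c where "\<And>p. p \<in> B \<Longrightarrow> p dvd u + \<rho> p"
    and "\<And>p r s. prime p \<Longrightarrow> p ^ b \<le> h \<Longrightarrow> (r, s) \<in> C \<Longrightarrow> p dvd u + r \<Longrightarrow> \<not> p ^ b dvd c p + s"
proof -
  define Small where "Small = {p. prime p \<and> p ^ b \<le> h}"
  have "\<forall>p\<in>Small. \<exists>a c. \<forall>(r, s) \<in> C. \<not> (p dvd a + r \<and> p ^ b dvd c + s)"
    using admissible unfolding admissible_at_def Small_def by blast
  from bchoice[OF this] obtain a
    where "\<forall>p\<in>Small. \<exists>c. \<forall>(r, s) \<in> C. \<not> (p dvd a p + r \<and> p ^ b dvd c + s)" ..
  from bchoice[OF this] obtain c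
    where ac: "\<forall>p\<in>Small. \<forall>(r, s) \<in> C. \<not> (p dvd a p + r \<and> p ^ b dvd c p + s)" ..
  have small_le: "p \<le> h" if "p \<in> Small" for p
  proof -
    have "p \<le> p ^ b" using that \<open>1 \<le> b\<close> unfolding Small_def
      by (intro self_le_power) (auto dest: prime_gt_0_nat)
    then show ?thesis using that unfolding Small_def by simp
  qed
  then have "finite Small" by (intro finite_subset[of Small "{..h}"]) auto
  have "p \<notin> Small" if "p \<in> B" for p
    using assms(3)[OF that] small_le by (meson not_le)
  then have "B \<inter> Small = {}" by blast
  have "finite (B \<union> Small)" using assms(2) \<open>finite Small\<close> by simp
  moreover have "prime p" if "p \<in> B \<union> Small" for p
    using that assms(3) unfolding Small_def by blast
  ultimately obtain u where u: "\<forall>p\<in>B \<union> Small. \<forall>t.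
      p ^ 1 dvd u + t \<longleftrightarrow> p ^ 1 dvd (if p \<in> B then p - \<rho> p else a p) + t"
    using chinese_remainder_prime_powers[where k = 1 and f = "\<lambda>p. if p \<in> B then p - \<rho> p else a p"]
    by blast
  show thesis
  proof (rule that)
    fix p assume "p \<in> B"
    then show "p dvd u + \<rho> p" using u assms(3)[of p] by simp
  next
    fix p r s assume "prime p" "p ^ b \<le> h" "(r, s) \<in> C" "p dvd u + r"
    then have "p \<in> Small" "p \<notin> B" using \<open>B \<inter> Small = {}\<close> unfolding Small_def by auto
    then show "\<not> p ^ b dvd c p + s"
      using u ac \<open>(r, s) \<in> C\<close> \<open>p dvd u + r\<close> by fastforce
  qed
qed

lemma realizable_if_admissible:
  fixes b w h :: nat
  assumes "1 \<le> b" and C: "C \<subseteq> {1..w} \<times> {1..h}" and X: "X \<subseteq> {1..w} \<times> {1..h}"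
    and "C \<inter> X = {}" and admissible: "\<And>p. prime p \<Longrightarrow> admissible_at b p C"
  shows "realizable b C X"
proof -
  have "finite X" using X by (rule finite_subset) simp
  then obtain B \<xi> where B: "finite B" "\<And>p. p \<in> B \<Longrightarrow> prime p \<and> w + h < p" and "\<xi> ` B = X"
    by (rule ex_big_primes_onto[where K = "w + h"]) (rule that)
  have big: "w < p" "h < p ^ b" if "p \<in> B" for p
  proof -
    have "p \<le> p ^ b" using B(2)[OF that] \<open>1 \<le> b\<close> by (intro self_le_power) auto
    then show "w < p" "h < p ^ b" using B(2)[OF that] by linarith+
  qed
  have \<xi>: "fst (\<xi> p) < p" "snd (\<xi> p) < p ^ b" if "p \<in> B" for p
  proof -
    have "\<xi> p \<in> {1..w} \<times> {1..h}" using that \<open>\<xi> ` B = X\<close> X by blast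
    then show "fst (\<xi> p) < p" "snd (\<xi> p) < p ^ b" using big[OF that] by auto
  qed
  have B_big: "prime p \<and> h < p \<and> fst (\<xi> p) < p" if "p \<in> B" for p
    using B(2)[OF that] \<xi>(1)[OF that] by linarith
  from \<open>1 \<le> b\<close> B(1) B_big admissible obtain u c where u_B: "\<And>p. p \<in> B \<Longrightarrow> p dvd u + fst (\<xi> p)"
    and c: "\<And>p r s. prime p \<Longrightarrow> p ^ b \<le> h \<Longrightarrow> (r, s) \<in> C \<Longrightarrow> p dvd u + r \<Longrightarrow> \<not> p ^ b dvd c p + s"
    by (rule ex_first_coordinate) (assumption | rule that)+
  define c' where "c' p = (if p \<in> B then p ^ b - snd (\<xi> p) else if p ^ b \<le> h then c p else 0)" for p
  have c'_B: "p ^ b dvd c' p + snd (\<xi> p)" if "p \<in> B" for p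
    using \<xi>(2)[OF that] that by (simp add: c'_def)
  show ?thesis
  proof (rule realizable_if_residues[where c = c' and u = u and w = w])
    fix r s assume "(r, s) \<in> C \<union> X"
    then have "(r, s) \<in> {1..w} \<times> {1..h}" using C X by blast
    then show "1 \<le> r \<and> r \<le> w" by simp
  next
    fix r s assume "(r, s) \<in> X"
    then obtain p where p: "p \<in> B" "\<xi> p = (r, s)" using \<open>\<xi> ` B = X\<close> by (metis imageE)
    then show "\<exists>p. prime p \<and> p dvd u + r \<and> p ^ b dvd c' p + s"
      using B(2)[OF p(1)] u_B[OF p(1)] c'_B[OF p(1)] by auto
  next
    fix p r s assume p: "prime p" "p dvd u + r" and "(r, s) \<in> C"
    then have "(r, s) \<in> {1..w} \<times> {1..h}" using C by blast
    then have rs: "r \<le> w" "1 \<le> s" "s \<le> h" by auto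
    show "\<not> p ^ b dvd c' p + s"
    proof
      assume dvd: "p ^ b dvd c' p + s"
      show False
      proof (cases "p \<in> B")
        case True
        have "r < p" "s < p ^ b" using big[OF True] rs by linarith+
        then have "(r, s) = \<xi> p"
          using pair_eq_if_dvd_shifts[OF p(2) u_B[OF True] dvd c'_B[OF True]] \<xi>[OF True] by simp
        then show False using True \<open>\<xi> ` B = X\<close> \<open>(r, s) \<in> C\<close> \<open>C \<inter> X = {}\<close> by blast
      next
        case False
        then show False
          using c[OF p(1) _ \<open>(r, s) \<in> C\<close> p(2)] dvd rs
          by (cases "p ^ b \<le> h") (auto simp: c'_def dest: dvd_imp_le)
      qed
    qed
  qed
qed

theorem realizable_iff_admissible:
  fixes b w h :: nat
  assumes "1 \<le> b" "C \<subseteq> {1..w} \<times> {1..h}" "X \<subseteq> {1..w} \<times> {1..h}" "C \<inter> X = {}"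
  shows "realizable b C X \<longleftrightarrow> (\<forall>p. prime p \<longrightarrow> admissible_at b p C)"
proof
  assume "realizable b C X"
  moreover have "\<And>r s. (r, s) \<in> C \<Longrightarrow> 0 < r" using assms(2) by auto
  ultimately show "\<forall>p. prime p \<longrightarrow> admissible_at b p C"
    using admissible_at_if_realizable by blast
qed (use realizable_if_admissible assms in blast)

lemma ex_shift_avoiding_multiples:
  fixes m y :: nat
  assumes "2 \<le> m" "3 \<le> m \<or> \<not> m dvd y"
  shows "\<exists>a. \<not> m dvd a + 1 \<and> \<not> m dvd a + y"
proof (cases "m dvd y")
  case True
  then have "\<not> m dvd 1 + 1" using assms by (auto dest: dvd_imp_le)
  moreover have "\<not> m dvd 1 + y"
    using dvd_add_left_iff[OF True, of 1] assms(1) by auto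
  ultimately show ?thesis by blast
next
  case False
  then show ?thesis using assms(1) by (intro exI[of _ 0]) auto
qed

lemma admissible_at_rect_boundary:
  fixes b p M N :: nat
  assumes "1 \<le> b" "prime p" "p = 2 \<Longrightarrow> (odd M \<or> N < 2 ^ b) \<and> (b = 1 \<longrightarrow> odd N)"
  shows "admissible_at b p (rect_boundary M N)"
proof (cases "N < p ^ b")
  case True
  have "\<not> p ^ b dvd 0 + s" if "(r, s) \<in> rect_boundary M N" for r s
    using that True unfolding rect_boundary_def by (auto dest: dvd_imp_le)
  then show ?thesis unfolding admissible_at_def by blast
next
  case False
  have "2 \<le> p" using assms(2) prime_ge_2_nat by blast
  have "p \<le> p ^ b" using assms(1) \<open>2 \<le> p\<close> by (intro self_le_power) auto
  have "3 \<le> p \<or> \<not> p dvd M"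
  proof (cases "p = 2")
    case True
    then show ?thesis using assms(3) False by auto
  qed (use \<open>2 \<le> p\<close> in linarith)
  then obtain a where a: "\<not> p dvd a + 1" "\<not> p dvd a + M"
    using ex_shift_avoiding_multiples[OF \<open>2 \<le> p\<close>] by blast
  have "3 \<le> p ^ b \<or> \<not> p ^ b dvd N"
  proof (cases "p ^ b = 2")
    case True
    then have "p = 2" using \<open>2 \<le> p\<close> \<open>p \<le> p ^ b\<close> by linarith
    with True have "b = 1" using power_inject_exp[of "2::nat" b 1] by simp
    then show ?thesis using assms(3) \<open>p = 2\<close> True by simp
  qed (use \<open>2 \<le> p\<close> \<open>p \<le> p ^ b\<close> in linarith)
  moreover have "2 \<le> p ^ b" using \<open>2 \<le> p\<close> \<open>p \<le> p ^ b\<close> by linarith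
  ultimately obtain c where c: "\<not> p ^ b dvd c + 1" "\<not> p ^ b dvd c + N"
    using ex_shift_avoiding_multiples by blast
  have "\<not> (p dvd a + r \<and> p ^ b dvd c + s)" if "(r, s) \<in> rect_boundary M N" for r s
    using that a c unfolding rect_boundary_def by auto
  then show ?thesis unfolding admissible_at_def by blast
qed

lemma not_admissible_at_2_even_width:
  fixes b M N :: nat
  assumes "even M" "0 < M" "2 ^ b \<le> N"
  shows "\<not> admissible_at b 2 (rect_boundary M N)"
proof
  assume "admissible_at b 2 (rect_boundary M N)"
  then obtain a c where ac: "\<forall>(r, s) \<in> rect_boundary M N. \<not> (2 dvd a + r \<and> 2 ^ b dvd c + s)"
    unfolding admissible_at_def by blast
  obtain r where r: "r = 1 \<or> r = M" "2 dvd a + r"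
    using \<open>even M\<close> by (metis dvd_add_left_iff even_add odd_one)
  obtain s where s: "s \<in> {1..2 ^ b}" "2 ^ b dvd c + s"
    using ex_multiple_in_window[of "2 ^ b" c] by auto
  have "(r, s) \<in> rect_boundary M N"
    using r(1) s(1) assms unfolding rect_boundary_def by auto
  then show False using ac r(2) s(2) by blast
qed

lemma not_admissible_at_2_even_height:
  fixes M N :: nat
  assumes "even N" "2 \<le> M" "0 < N"
  shows "\<not> admissible_at 1 2 (rect_boundary M N)"
proof
  assume "admissible_at 1 2 (rect_boundary M N)"
  then obtain a c where ac: "\<forall>(r, s) \<in> rect_boundary M N. \<not> (2 dvd a + r \<and> 2 dvd c + s)"
    unfolding admissible_at_def by auto
  obtain r where r: "r \<in> {1..2}" "2 dvd a + r"
    using ex_multiple_in_window[of 2 a] by auto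
  obtain s where s: "s = 1 \<or> s = N" "2 dvd c + s"
    using \<open>even N\<close> by (metis dvd_add_left_iff even_add odd_one)
  have "(r, s) \<in> rect_boundary M N"
    using r(1) s(1) assms unfolding rect_boundary_def by auto
  then show False using ac r(2) s(2) by blast
qed

theorem realizable_rect_iff:
  fixes b M N :: nat
  assumes "1 \<le> b" "2 \<le> M" "2 \<le> N"
  shows "realizable b (rect_boundary M N) (rect_interior M N) \<longleftrightarrow>
    (odd M \<or> N < 2 ^ b) \<and> (b = 1 \<longrightarrow> odd N)"
proof -
  have "realizable b (rect_boundary M N) (rect_interior M N) \<longleftrightarrow>
      (\<forall>p. prime p \<longrightarrow> admissible_at b p (rect_boundary M N))"
    using assms(1) by (rule realizable_iff_admissible[where w = M and h = N])
      (auto simp: rect_boundary_def rect_interior_def)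
  also have "\<dots> \<longleftrightarrow> (odd M \<or> N < 2 ^ b) \<and> (b = 1 \<longrightarrow> odd N)"
  proof
    assume "\<forall>p. prime p \<longrightarrow> admissible_at b p (rect_boundary M N)"
    then have admissible_2: "admissible_at b 2 (rect_boundary M N)" by simp
    show "(odd M \<or> N < 2 ^ b) \<and> (b = 1 \<longrightarrow> odd N)"
    proof (intro conjI impI)
      show "odd M \<or> N < 2 ^ b"
      proof (rule ccontr)
        assume "\<not> (odd M \<or> N < 2 ^ b)"
        then have "even M" "2 ^ b \<le> N" by auto
        then show False using not_admissible_at_2_even_width admissible_2 assms(2) by simp
      qed
      show "odd N" if "b = 1"
        using not_admissible_at_2_even_height[of N M] admissible_2 assms(2,3) that by auto
    qed
  qed (use admissible_at_rect_boundary assms(1) in blast)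
  finally show ?thesis .
qed

theorem mainTheorem9:
  fixes b M N :: nat
  assumes "1 \<le> b" and "2 \<le> M" and "2 \<le> N"
  shows "(\<exists>w. is_b_pattern b w (rect_boundary M N) (rect_interior M N))
    \<and> (b = 1 \<longrightarrow> (realizable b (rect_boundary M N) (rect_interior M N) \<longleftrightarrow> odd M \<and> odd N))
    \<and> (2 \<le> b \<longrightarrow> (realizable b (rect_boundary M N) (rect_interior M N) \<longleftrightarrow> odd M \<or> N < 2 ^ b))
    \<and> (\<forall>K. \<exists>M' N'. K \<le> M' \<and> K \<le> N' \<and> 2 \<le> M' \<and> 2 \<le> N' \<and>
           realizable b (rect_boundary M' N') (rect_interior M' N'))"
proof -
  have "M + N \<le> (M + N) ^ b" using assms by (intro self_le_power) auto
  then have "is_b_pattern b (M + N) (rect_boundary M N) (rect_interior M N)"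
    using assms(2,3) unfolding is_b_pattern_def rect_boundary_def rect_interior_def by auto
  moreover have "\<exists>M' N'. K \<le> M' \<and> K \<le> N' \<and> 2 \<le> M' \<and> 2 \<le> N' \<and>
      realizable b (rect_boundary M' N') (rect_interior M' N')" for K
    using realizable_rect_iff[OF assms(1), of "2 * K + 3" "2 * K + 3"]
    by (intro exI[of _ "2 * K + 3"]) simp
  ultimately show ?thesis
    using realizable_rect_iff[OF assms] assms(3) by auto
qed

end
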